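(* The norm $\|\cdot\|_X$ is tight (i.e. every vector of $V$ is tight) if and only if every proper nonempty face $F$ of the unit ball $B_X$ contains a unitangent vector $u$ that is perpendicular to $F$, i.e. $\langle u,v-w\rangle=0$ for all $v,w\in F$.
   Context: $V$ is a finite dimensional real vector space with a positive definite symmetric bilinear form $\langle\cdot,\cdot\rangle$, $\|v\|_2=\sqrt{\langle v,v\rangle}$; $\|\cdot\|_X$ is a norm with unit ball $B_X$ and dual norm $\|v\|_Y=\max\{\langle v,w\rangle:\|w\|_X=1\}$. A face of $B_X$ is a closed convex subset $F\subseteq B_X$ such that $u,w\in B_X$, $0<t<1$, $tu+(1-t)w\in F$ imply $u,w\in F$. A vector $u$ is unitangent if $\|u\|_2^2=\|u\|_X\|u\|_Y$. For norms $\|\cdot\|_P,\|\cdot\|_Q$ (among $X,Y,2$), $c=a+b$ is a $PQ$-decomposition if for every decomposition $c=a'+b'$: $\|a'\|_P>\|a\|_P$, or $\|b'\|_Q>\|b\|_Q$, or $(\|a'\|_P,\|b'\|_Q)=(\|a\|_P,\|b\|_Q)$. A vector is tight if every $X2$-decomposition of it is an $XY$-decomposition. *)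

theory Defs
  imports "HOL-Analysis.Analysis"
begin

text \<open>V is modelled as a euclidean_space type; the positive definite form is the inner product.
  A norm X is a real function N on V satisfying the norm axioms.\<close>

definition is_norm :: "('a::euclidean_space \<Rightarrow> real) \<Rightarrow> bool" where
  "is_norm N \<longleftrightarrow> (\<forall>x. N x \<ge> 0) \<and> (\<forall>x. N x = 0 \<longleftrightarrow> x = 0)
     \<and> (\<forall>c x. N (c *\<^sub>R x) = \<bar>c\<bar> * N x) \<and> (\<forall>x y. N (x + y) \<le> N x + N y)"

definition dual_norm :: "('a::euclidean_space \<Rightarrow> real) \<Rightarrow> 'a \<Rightarrow> real" where
  "dual_norm N v = Sup {inner v w | w. N w = 1}"

definition unit_ball_of :: "('a::euclidean_space \<Rightarrow> real) \<Rightarrow> 'a set" where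
  "unit_ball_of N = {x. N x \<le> 1}"

definition is_face :: "('a::euclidean_space \<Rightarrow> real) \<Rightarrow> 'a set \<Rightarrow> bool" where
  "is_face N F \<longleftrightarrow> closed F \<and> convex F \<and> F \<subseteq> unit_ball_of N \<and>
     (\<forall>u \<in> unit_ball_of N. \<forall>w \<in> unit_ball_of N. \<forall>t::real. 0 < t \<and> t < 1 \<and>
        t *\<^sub>R u + (1 - t) *\<^sub>R w \<in> F \<longrightarrow> u \<in> F \<and> w \<in> F)"

definition unitangent :: "('a::euclidean_space \<Rightarrow> real) \<Rightarrow> 'a \<Rightarrow> bool" where
  "unitangent N u \<longleftrightarrow> (norm u)\<^sup>2 = N u * dual_norm N u"

definition is_decomp :: "('a::euclidean_space \<Rightarrow> real) \<Rightarrow> ('a \<Rightarrow> real) \<Rightarrow> 'a \<Rightarrow> 'a \<Rightarrow> 'a \<Rightarrow> bool" where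
  "is_decomp P Q c a b \<longleftrightarrow> c = a + b \<and>
     (\<forall>a' b'. c = a' + b' \<longrightarrow> P a' > P a \<or> Q b' > Q b \<or> (P a' = P a \<and> Q b' = Q b))"

text \<open>A vector is tight if every X2-decomposition of it is an XY-decomposition.\<close>
definition tight :: "('a::euclidean_space \<Rightarrow> real) \<Rightarrow> 'a \<Rightarrow> bool" where
  "tight N c \<longleftrightarrow> (\<forall>a b. is_decomp N norm c a b \<longrightarrow> is_decomp N (dual_norm N) c a b)"

end

theory Submission
  imports Defs
begin

text \<open>If every proper face F of the unit ball carries a unitangent u perpendicular to F, take an
  X2-decomposition c = a + b. First-order optimality of a makes b expose the face F through a/N(a),
  and the unitangent u of that face satisfies u \<bullet> c = N(a) Y(u) + Y(b), while
  u \<bullet> c \<le> N(a') Y(u) + Y(b') for every other decomposition c = a' + b': this dual certificate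
  shows that a + b is an XY-decomposition.

  Conversely, let the norm be tight. If b exposes a face at z, then z + b is an X2-, hence an
  XY-decomposition, so it lies on the boundary of the Minkowski sum of the X-ball and the Y-ball of
  radius Y(b); a separating functional gives a vector w of norm 1, normal to the unit ball at z and
  lying in the face exposed by b. An arbitrary proper face F is a limit of exposed faces (by induction
  on the dimension), and a compactness argument turns the resulting approximate normals into some
  w \<in> F normal to the unit ball along all of F; such a w is unitangent and perpendicular to F.\<close>

section \<open>Approximating faces of compact convex sets by exposed faces\<close>

lemma compact_small_values_near_zeros:
  fixes f :: "'a::metric_space \<Rightarrow> real"
  assumes K: "compact K" and f: "continuous_on K f" and \<eta>: "\<eta> > 0"
  obtains \<tau> where "\<tau> > 0" "\<And>y. y \<in> K \<Longrightarrow> f y < \<tau> \<Longrightarrow> infdist y {y\<in>K. f y \<le> 0} < \<eta>"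
proof -
  define Z where "Z = {y\<in>K. f y \<le> 0}"
  define K' where "K' = K \<inter> {y. \<eta> \<le> infdist y Z}"
  have "closed {y. \<eta> \<le> infdist y Z}"
    by (intro closed_Collect_le continuous_on_const continuous_on_infdist continuous_on_id)
  hence "compact K'" unfolding K'_def using K by (simp add: compact_Int_closed)
  show ?thesis
  proof (cases "K' = {}")
    case True
    show ?thesis by (rule that[of 1]) (use True in \<open>auto simp: K'_def Z_def\<close>)
  next
    case False
    have "continuous_on K' f" using f by (rule continuous_on_subset) (auto simp: K'_def)
    then obtain y0 where y0: "y0 \<in> K'" "\<And>y. y \<in> K' \<Longrightarrow> f y0 \<le> f y"
      using continuous_attains_inf[OF \<open>compact K'\<close> False] by blast
    have "y0 \<notin> Z" using y0(1) \<eta> by (auto simp: K'_def)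
    hence "f y0 > 0" using y0(1) by (auto simp: Z_def K'_def)
    moreover have "infdist y Z < \<eta>" if "y \<in> K" "f y < f y0" for y
      using y0(2)[of y] that by (force simp: K'_def)
    ultimately show ?thesis using that unfolding Z_def by blast
  qed
qed

text \<open>The point x below maximizes c \<bullet> y - \<epsilon> * norm (y - z) ^ 2 over y \<in> K.\<close>

lemma proximal_point:
  fixes c z :: "'a::euclidean_space"
  assumes K: "closed K" "convex K" "z \<in> K" and \<epsilon>: "\<epsilon> > 0"
  defines "x \<equiv> closest_point K (z + (1 / (2 * \<epsilon>)) *\<^sub>R c)"
  shows proximal_point_in: "x \<in> K"
    and proximal_point_support: "\<And>y. y \<in> K \<Longrightarrow> (c - (2 * \<epsilon>) *\<^sub>R (x - z)) \<bullet> y \<le> (c - (2 * \<epsilon>) *\<^sub>R (x - z)) \<bullet> x"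
    and proximal_point_gain: "\<epsilon> * (norm (x - z))\<^sup>2 \<le> c \<bullet> (x - z)"
proof -
  define p where "p = z + (1 / (2 * \<epsilon>)) *\<^sub>R c"
  have normal: "c - (2 * \<epsilon>) *\<^sub>R (x - z) = (2 * \<epsilon>) *\<^sub>R (p - x)"
    using \<epsilon> by (simp add: p_def algebra_simps)
  show "x \<in> K" using K unfolding x_def by (auto intro: closest_point_in_set)
  show "(c - (2 * \<epsilon>) *\<^sub>R (x - z)) \<bullet> y \<le> (c - (2 * \<epsilon>) *\<^sub>R (x - z)) \<bullet> x" if "y \<in> K" for y
  proof -
    have "(p - x) \<bullet> y \<le> (p - x) \<bullet> x"
      using closest_point_dot[OF K(2,1) that, of p] by (simp add: x_def p_def inner_diff_right)
    hence "((2 * \<epsilon>) *\<^sub>R (p - x)) \<bullet> y \<le> ((2 * \<epsilon>) *\<^sub>R (p - x)) \<bullet> x" using \<epsilon> by simp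
    thus ?thesis by (simp only: normal)
  qed
  have "(norm (p - x))\<^sup>2 \<le> (norm (p - z))\<^sup>2"
    using closest_point_le[OF K(1,3), of p] by (simp add: x_def p_def dist_norm)
  moreover have "2 * ((p - z) \<bullet> (x - z)) = (norm (p - z))\<^sup>2 + (norm (x - z))\<^sup>2 - (norm (p - x))\<^sup>2"
    using dot_norm_neg[of "p - z" "x - z"] by simp
  ultimately have "(norm (x - z))\<^sup>2 \<le> 2 * ((p - z) \<bullet> (x - z))" by linarith
  also have "\<dots> = (1 / \<epsilon>) * (c \<bullet> (x - z))" by (simp add: p_def)
  finally show "\<epsilon> * (norm (x - z))\<^sup>2 \<le> c \<bullet> (x - z)"
    using \<epsilon> by (simp add: field_simps)
qed

lemma proximal_point_tendsto:
  fixes b0 d z :: "'a::euclidean_space"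
  assumes K: "compact K" "convex K" "z \<in> K"
    and b0: "\<And>y. y \<in> K \<Longrightarrow> b0 \<bullet> y \<le> b0 \<bullet> z"
    and d: "\<And>y. y \<in> K \<Longrightarrow> b0 \<bullet> y = b0 \<bullet> z \<Longrightarrow> d \<bullet> y \<le> d \<bullet> z"
  shows "((\<lambda>\<epsilon>. closest_point K (z + (1 / (2 * \<epsilon>)) *\<^sub>R (b0 + \<epsilon> *\<^sub>R d))) \<longlongrightarrow> z) (at_right 0)"
proof (rule tendstoI)
  fix \<eta> :: real assume "\<eta> > 0"
  define f where "f y = b0 \<bullet> (z - y) + max 0 ((norm (y - z))\<^sup>2 - d \<bullet> (y - z))" for y
  have "continuous_on K f" unfolding f_def by (intro continuous_intros)
  have zeros: "{y\<in>K. f y \<le> 0} = {z}"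
  proof safe
    fix y assume y: "y \<in> K" "f y \<le> 0"
    have "b0 \<bullet> y = b0 \<bullet> z" "(norm (y - z))\<^sup>2 \<le> d \<bullet> (y - z)"
      using y b0[OF y(1)] by (auto simp: f_def inner_diff_right)
    moreover have "d \<bullet> (y - z) \<le> 0" using d[OF y(1)] calculation(1) by (simp add: inner_diff_right)
    ultimately have "(norm (y - z))\<^sup>2 \<le> 0" by linarith
    thus "y = z" by simp
  qed (simp_all add: f_def K)
  obtain \<tau> where \<tau>: "\<tau> > 0" "\<And>y. y \<in> K \<Longrightarrow> f y < \<tau> \<Longrightarrow> dist y z < \<eta>"
    using compact_small_values_near_zeros[OF K(1) \<open>continuous_on K f\<close> \<open>\<eta> > 0\<close>]
    unfolding zeros by auto
  have "((\<lambda>\<epsilon>::real. \<epsilon> * (norm d * diameter K)) \<longlongrightarrow> 0 * (norm d * diameter K)) (at_right 0)"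
    by (intro tendsto_intros)
  hence "\<forall>\<^sub>F \<epsilon> in at_right 0. \<epsilon> * (norm d * diameter K) < \<tau>"
    using \<tau>(1) by (simp add: order_tendstoD)
  moreover have "\<forall>\<^sub>F \<epsilon> in at_right 0. (0::real) < \<epsilon>" by (simp add: eventually_at_right_less)
  ultimately show "\<forall>\<^sub>F \<epsilon> in at_right 0. dist (closest_point K (z + (1 / (2 * \<epsilon>)) *\<^sub>R (b0 + \<epsilon> *\<^sub>R d))) z < \<eta>"
  proof eventually_elim
    case (elim \<epsilon>)
    define x where "x = closest_point K (z + (1 / (2 * \<epsilon>)) *\<^sub>R (b0 + \<epsilon> *\<^sub>R d))"
    have x: "x \<in> K" using proximal_point_in[OF compact_imp_closed[OF K(1)] K(2,3) elim(2)] by (simp add: x_def)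
    have "\<epsilon> * (norm (x - z))\<^sup>2 \<le> (b0 + \<epsilon> *\<^sub>R d) \<bullet> (x - z)"
      using proximal_point_gain[OF compact_imp_closed[OF K(1)] K(2,3) elim(2)] by (simp add: x_def)
    hence gain: "b0 \<bullet> (z - x) + \<epsilon> * ((norm (x - z))\<^sup>2 - d \<bullet> (x - z)) \<le> 0"
      by (simp add: inner_add_left inner_diff_right algebra_simps)
    have "0 \<le> b0 \<bullet> (z - x)" using b0[OF x] by (simp add: inner_diff_right)
    hence "(norm (x - z))\<^sup>2 - d \<bullet> (x - z) \<le> 0"
      using gain elim(2) by (smt (verit) mult_pos_pos)
    hence "f x = b0 \<bullet> (z - x)" by (simp add: f_def)
    also have "\<dots> \<le> \<epsilon> * (d \<bullet> (x - z))"
    proof -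
      have "0 \<le> \<epsilon> * (norm (x - z))\<^sup>2" using elim(2) by simp
      thus ?thesis using gain unfolding right_diff_distrib by linarith
    qed
    also have "\<dots> \<le> \<epsilon> * (norm d * diameter K)"
    proof -
      have "norm (x - z) \<le> diameter K"
        using diameter_bounded_bound[OF compact_imp_bounded[OF K(1)] x K(3)] by (simp add: dist_norm)
      hence "d \<bullet> (x - z) \<le> norm d * diameter K"
        by (meson norm_cauchy_schwarz norm_ge_zero mult_left_mono order_trans)
      thus ?thesis using elim(2) by simp
    qed
    finally show ?case using \<tau>(2)[OF x] elim(1) by (simp add: x_def)
  qed
qed

lemma tilted_support_bound:
  fixes b0 d x z g :: "'a::euclidean_space"
  assumes K: "bounded K" "x \<in> K" "z \<in> K" "g \<in> K" and \<epsilon>: "\<epsilon> > 0"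
    and b0: "b0 \<bullet> g \<le> b0 \<bullet> z"
    and g: "(b0 + \<epsilon> *\<^sub>R d - (2 * \<epsilon>) *\<^sub>R (x - z)) \<bullet> z \<le> (b0 + \<epsilon> *\<^sub>R d - (2 * \<epsilon>) *\<^sub>R (x - z)) \<bullet> g"
  shows "b0 \<bullet> (z - g) + max 0 (d \<bullet> (z - g))
    \<le> \<epsilon> * (diameter K * (norm d + 2 * diameter K)) + 2 * diameter K * dist x z"
proof -
  define D where "D = diameter K"
  have D: "\<And>y y'. y \<in> K \<Longrightarrow> y' \<in> K \<Longrightarrow> norm (y - y') \<le> D" "D \<ge> 0"
    using diameter_bounded_bound[OF K(1)] diameter_ge_0[OF K(1)] by (auto simp: D_def dist_norm)
  define q where "q = (d - 2 *\<^sub>R (x - z)) \<bullet> (g - z)"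
  have bq: "b0 \<bullet> (z - g) \<le> \<epsilon> * q"
    using g by (simp add: q_def inner_add_left inner_diff_left inner_diff_right algebra_simps)
  have "0 \<le> b0 \<bullet> (z - g)" using b0 by (simp add: inner_diff_right)
  hence "q \<ge> 0" using bq \<epsilon> by (smt (verit) mult_pos_neg)
  have "q \<le> norm (d - 2 *\<^sub>R (x - z)) * norm (g - z)"
    unfolding q_def by (rule norm_cauchy_schwarz)
  also have "\<dots> \<le> (norm d + 2 * D) * D"
  proof (rule mult_mono)
    show "norm (d - 2 *\<^sub>R (x - z)) \<le> norm d + 2 * D"
      using norm_triangle_ineq4[of d "2 *\<^sub>R (x - z)"] D(1)[OF K(2,3)] by simp
  qed (use D K in auto)
  finally have "b0 \<bullet> (z - g) \<le> \<epsilon> * (D * (norm d + 2 * D))"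
    using bq \<epsilon> by (smt (verit) mult.commute mult_left_mono)
  moreover have "d \<bullet> (z - g) \<le> 2 * D * dist x z"
  proof -
    have "d \<bullet> (z - g) \<le> 2 * ((z - x) \<bullet> (g - z))"
      using \<open>q \<ge> 0\<close> by (simp add: q_def inner_diff_left inner_diff_right algebra_simps)
    also have "\<dots> \<le> 2 * (dist x z * D)"
      using norm_cauchy_schwarz[of "z - x" "g - z"] D(1)[OF K(4,3)]
        mult_left_mono[of "norm (g - z)" D "dist x z"]
      by (simp add: dist_norm norm_minus_commute)
    finally show ?thesis by (simp add: mult_ac)
  qed
  moreover have "0 \<le> 2 * D * dist x z" using D(2) by simp
  ultimately show ?thesis by (simp add: D_def)
qed

text \<open>Tilting b0 by \<epsilon> d, the proximal point at z stays near z as \<epsilon> \<rightarrow> 0, and the functional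
  supporting K there exposes only points near the maximizers of d among those of b0.\<close>

lemma exposed_face_of_exposed_face_approx:
  fixes b0 d z :: "'a::euclidean_space"
  assumes K: "compact K" "convex K" "z \<in> K"
    and b0: "\<And>y. y \<in> K \<Longrightarrow> b0 \<bullet> y \<le> b0 \<bullet> z"
    and d: "\<And>y. y \<in> K \<Longrightarrow> b0 \<bullet> y = b0 \<bullet> z \<Longrightarrow> d \<bullet> y \<le> d \<bullet> z"
    and \<delta>: "\<delta> > 0"
  obtains b z' where "z' \<in> K" "\<And>y. y \<in> K \<Longrightarrow> b \<bullet> y \<le> b \<bullet> z'" "dist z' z < \<delta>"
    "\<And>g. g \<in> K \<Longrightarrow> b \<bullet> g = b \<bullet> z' \<Longrightarrow> infdist g {e\<in>K. b0 \<bullet> e = b0 \<bullet> z \<and> d \<bullet> e = d \<bullet> z} < \<delta>"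
proof -
  define x where "x \<epsilon> = closest_point K (z + (1 / (2 * \<epsilon>)) *\<^sub>R (b0 + \<epsilon> *\<^sub>R d))" for \<epsilon>
  define b where "b \<epsilon> = b0 + \<epsilon> *\<^sub>R d - (2 * \<epsilon>) *\<^sub>R (x \<epsilon> - z)" for \<epsilon>
  define D where "D = diameter K"
  have x: "x \<epsilon> \<in> K" "\<And>y. y \<in> K \<Longrightarrow> b \<epsilon> \<bullet> y \<le> b \<epsilon> \<bullet> x \<epsilon>" if "\<epsilon> > 0" for \<epsilon>
    unfolding b_def x_def
    using proximal_point_in[OF compact_imp_closed[OF K(1)] K(2,3) that]
      proximal_point_support[OF compact_imp_closed[OF K(1)] K(2,3) that] by blast+
  define f where "f y = b0 \<bullet> (z - y) + max 0 (d \<bullet> (z - y))" for y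
  have "continuous_on K f" unfolding f_def by (intro continuous_intros)
  have zeros: "{y\<in>K. f y \<le> 0} = {e\<in>K. b0 \<bullet> e = b0 \<bullet> z \<and> d \<bullet> e = d \<bullet> z}"
  proof safe
    fix y assume y: "y \<in> K" "f y \<le> 0"
    have "b0 \<bullet> y = b0 \<bullet> z" "d \<bullet> z \<le> d \<bullet> y"
      using y b0[OF y(1)] by (auto simp: f_def inner_diff_right)
    thus "b0 \<bullet> y = b0 \<bullet> z" "d \<bullet> y = d \<bullet> z" using d[OF y(1)] by auto
  qed (simp_all add: f_def inner_diff_right)
  obtain \<tau> where \<tau>: "\<tau> > 0"
    "\<And>y. y \<in> K \<Longrightarrow> f y < \<tau> \<Longrightarrow> infdist y {e\<in>K. b0 \<bullet> e = b0 \<bullet> z \<and> d \<bullet> e = d \<bullet> z} < \<delta>"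
    using compact_small_values_near_zeros[OF K(1) \<open>continuous_on K f\<close> \<delta>] unfolding zeros by blast
  have face_bound: "f g \<le> \<epsilon> * (D * (norm d + 2 * D)) + 2 * D * dist (x \<epsilon>) z"
    if \<epsilon>: "\<epsilon> > 0" and g: "g \<in> K" "b \<epsilon> \<bullet> g = b \<epsilon> \<bullet> x \<epsilon>" for \<epsilon> g
    unfolding f_def D_def
    by (rule tilted_support_bound[OF compact_imp_bounded[OF K(1)] x(1)[OF \<epsilon>] K(3) g(1) \<epsilon> b0[OF g(1)]])
      (use x(2)[OF \<epsilon> K(3)] g(2) in \<open>simp add: b_def\<close>)
  have "(x \<longlongrightarrow> z) (at_right 0)"
    unfolding x_def by (rule proximal_point_tendsto[OF K b0 d])
  hence "((\<lambda>\<epsilon>. \<epsilon> * (D * (norm d + 2 * D)) + 2 * D * dist (x \<epsilon>) z)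
           \<longlongrightarrow> 0 * (D * (norm d + 2 * D)) + 2 * D * dist z z) (at_right 0)"
    by (intro tendsto_intros)
  hence "\<forall>\<^sub>F \<epsilon> in at_right 0. \<epsilon> * (D * (norm d + 2 * D)) + 2 * D * dist (x \<epsilon>) z < \<tau>"
    using \<tau>(1) by (simp add: order_tendstoD)
  moreover have "\<forall>\<^sub>F \<epsilon> in at_right 0. dist (x \<epsilon>) z < \<delta>"
    using \<open>(x \<longlongrightarrow> z) (at_right 0)\<close> \<delta> by (rule tendstoD)
  moreover have "\<forall>\<^sub>F \<epsilon> in at_right 0. (0::real) < \<epsilon>" by (simp add: eventually_at_right_less)
  ultimately have "\<forall>\<^sub>F \<epsilon> in at_right 0. \<epsilon> * (D * (norm d + 2 * D)) + 2 * D * dist (x \<epsilon>) z < \<tau>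
      \<and> dist (x \<epsilon>) z < \<delta> \<and> 0 < \<epsilon>"
    by (intro eventually_conj)
  then obtain \<epsilon> where \<epsilon>: "\<epsilon> * (D * (norm d + 2 * D)) + 2 * D * dist (x \<epsilon>) z < \<tau>"
    "dist (x \<epsilon>) z < \<delta>" "\<epsilon> > 0"
    using eventually_happens'[OF trivial_limit_at_right_real] by blast
  show ?thesis
  proof (rule that[OF x[OF \<epsilon>(3)] \<epsilon>(2)])
    fix g assume "g \<in> K" "b \<epsilon> \<bullet> g = b \<epsilon> \<bullet> x \<epsilon>"
    thus "infdist g {e\<in>K. b0 \<bullet> e = b0 \<bullet> z \<and> d \<bullet> e = d \<bullet> z} < \<delta>"
      using \<tau>(2) face_bound[OF \<epsilon>(3)] \<epsilon>(1) by (smt (verit))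
  qed
qed

lemma infdist_lessE:
  assumes "infdist x A < r" "A \<noteq> {}"
  obtains a where "a \<in> A" "dist x a < r"
  using assms cInf_lessD[of "(\<lambda>a. dist x a) ` A" r] by (auto simp: infdist_notempty)

lemma proper_face_of_in_exposed_face:
  fixes K :: "'a::euclidean_space set"
  assumes K: "convex K" and F: "F face_of K" "F \<noteq> K" "F \<noteq> {}"
  obtains a m where "\<And>y. y \<in> K \<Longrightarrow> a \<bullet> y \<le> m" "F \<subseteq> {y\<in>K. a \<bullet> y = m}"
    "aff_dim {y\<in>K. a \<bullet> y = m} < aff_dim K"
proof -
  obtain x where x: "x \<in> rel_interior F"
    using rel_interior_eq_empty face_of_imp_convex[OF F(1)] F(3) by blast
  have "x \<in> K" "x \<notin> rel_interior K"
    using face_of_subset_rel_boundary[OF F(1,2)] x rel_interior_subset by blast+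
  then obtain a where a: "\<And>y. y \<in> K \<Longrightarrow> a \<bullet> x \<le> a \<bullet> y" "\<And>y. y \<in> rel_interior K \<Longrightarrow> a \<bullet> x < a \<bullet> y"
    using supporting_hyperplane_rel_boundary[OF K] by metis
  define E where "E = K \<inter> {y. (- a) \<bullet> y = (- a) \<bullet> x}"
  have E: "E face_of K"
    unfolding E_def by (rule face_of_Int_supporting_hyperplane_le[OF K]) (use a(1) in auto)
  have "rel_interior K \<noteq> {}" using rel_interior_eq_empty K \<open>x \<in> K\<close> by blast
  hence "E \<noteq> K" using a(2) rel_interior_subset by (force simp: E_def)
  have "F \<subseteq> E"
    by (rule subset_of_face_of[OF E face_of_imp_subset[OF F(1)]])
      (use x \<open>x \<in> K\<close> in \<open>auto simp: E_def\<close>)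
  moreover have "E = {y\<in>K. (- a) \<bullet> y = (- a) \<bullet> x}" by (auto simp: E_def)
  ultimately show ?thesis
    using that[of "- a" "(- a) \<bullet> x"] a(1) face_of_aff_dim_lt[OF K E \<open>E \<noteq> K\<close>] by auto
qed

text \<open>Induction on the dimension: a proper face lies in a lower-dimensional exposed face E, and
  exposed faces of E lift to exposed faces of K.\<close>

lemma face_of_approx_by_exposed:
  fixes K :: "'a::euclidean_space set"
  assumes "compact K" "convex K" "F face_of K" "u \<in> F" "\<delta> > 0"
  shows "\<exists>b z. z \<in> K \<and> (\<forall>y\<in>K. b \<bullet> y \<le> b \<bullet> z) \<and> dist z u < \<delta> \<and>
           (\<forall>g\<in>K. b \<bullet> g = b \<bullet> z \<longrightarrow> infdist g F < \<delta>)"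
  using assms
proof (induction "nat (aff_dim K + 1)" arbitrary: K F u \<delta> rule: less_induct)
  case less
  note K = less.prems(1,2) and F = less.prems(3) and u = less.prems(4) and \<delta> = less.prems(5)
  show ?case
  proof (cases "F = K")
    case True
    thus ?thesis using u \<delta> by (intro exI[of _ 0] exI[of _ u]) auto
  next
    case False
    obtain a m where am: "\<And>y. y \<in> K \<Longrightarrow> a \<bullet> y \<le> m" "F \<subseteq> {y\<in>K. a \<bullet> y = m}"
      "aff_dim {y\<in>K. a \<bullet> y = m} < aff_dim K"
      using proper_face_of_in_exposed_face[OF K(2) F False] u by blast
    define E where "E = {y\<in>K. a \<bullet> y = m}"
    have "E face_of K"
      using face_of_Int_supporting_hyperplane_le[OF K(2), of a m] am(1) by (simp add: E_def Int_def)
    hence E: "compact E" "convex E" "F face_of E"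
      using face_of_imp_compact[OF K(2,1)] face_of_imp_convex face_of_subset[OF F am(2)]
        face_of_imp_subset by (auto simp: E_def)
    have "nat (aff_dim E + 1) < nat (aff_dim K + 1)"
      using am(3) aff_dim_geq[of E] by (simp add: E_def)
    then obtain d z where z: "z \<in> E" "\<forall>y\<in>E. d \<bullet> y \<le> d \<bullet> z" "dist z u < \<delta>/2"
      "\<forall>g\<in>E. d \<bullet> g = d \<bullet> z \<longrightarrow> infdist g F < \<delta>/2"
      using less.hyps[OF _ E u, of "\<delta>/2"] \<delta> by auto
    have "z \<in> K" "a \<bullet> z = m" using z(1) by (auto simp: E_def)
    obtain b z' where z': "z' \<in> K" "\<And>y. y \<in> K \<Longrightarrow> b \<bullet> y \<le> b \<bullet> z'" "dist z' z < \<delta>/2"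
      "\<And>g. g \<in> K \<Longrightarrow> b \<bullet> g = b \<bullet> z' \<Longrightarrow> infdist g {e\<in>K. a \<bullet> e = a \<bullet> z \<and> d \<bullet> e = d \<bullet> z} < \<delta>/2"
      by (rule exposed_face_of_exposed_face_approx[OF K \<open>z \<in> K\<close>, of a d "\<delta>/2"])
        (use am(1) z(2) \<delta> \<open>a \<bullet> z = m\<close> in \<open>auto simp: E_def\<close>)
    have "infdist g F < \<delta>" if g: "g \<in> K" "b \<bullet> g = b \<bullet> z'" for g
    proof -
      obtain e where e: "e \<in> K" "a \<bullet> e = a \<bullet> z" "d \<bullet> e = d \<bullet> z" "dist g e < \<delta>/2"
        using infdist_lessE[OF z'(4)[OF g]] \<open>z \<in> K\<close> by blast
      have "infdist e F < \<delta>/2" using z(4) e \<open>a \<bullet> z = m\<close> by (simp add: E_def)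
      thus ?thesis using infdist_triangle[of g F e] e(4) by linarith
    qed
    moreover have "dist z' u < \<delta>" using z'(3) z(3) dist_triangle[of z' u z] by linarith
    ultimately show ?thesis using z'(1,2) by blast
  qed
qed

section \<open>Norms, dual norms and faces of the unit ball\<close>

lemma sublinear_imp_convex_on:
  fixes f :: "'a::real_vector \<Rightarrow> real"
  assumes add: "\<And>x y. f (x + y) \<le> f x + f y" and scale: "\<And>t x. 0 \<le> t \<Longrightarrow> f (t *\<^sub>R x) = t * f x"
  shows "convex_on UNIV f"
proof (rule convex_onI)
  fix t :: real and x y :: 'a assume "0 < t" "t < 1"
  thus "f ((1 - t) *\<^sub>R x + t *\<^sub>R y) \<le> (1 - t) * f x + t * f y"
    using add[of "(1 - t) *\<^sub>R x" "t *\<^sub>R y"] scale[of "1 - t" x] scale[of t y] by simp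
qed simp

lemma convex_on_sublevel:
  fixes f :: "'a::real_vector \<Rightarrow> real"
  assumes "convex_on UNIV f"
  shows "convex {x. f x \<le> r}"
proof (rule convexI)
  fix x y :: 'a and u v :: real
  assume xy: "x \<in> {x. f x \<le> r}" "y \<in> {x. f x \<le> r}" and uv: "0 \<le> u" "0 \<le> v" "u + v = 1"
  hence "f (u *\<^sub>R x + v *\<^sub>R y) \<le> u * f x + v * f y"
    using convex_onD[OF assms, of v x y] by (simp add: eq_diff_eq[symmetric])
  also have "\<dots> \<le> u * r + v * r" using xy uv by (intro add_mono mult_left_mono) auto
  finally show "u *\<^sub>R x + v *\<^sub>R y \<in> {x. f x \<le> r}" using uv(3) by (simp add: distrib_right[symmetric])
qed

lemma interior_scaleR_out:
  fixes c :: "'a::real_normed_vector"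
  assumes "c \<in> interior S"
  obtains t where "t > 0" "(1 + t) *\<^sub>R c \<in> S"
proof -
  obtain e where e: "e > 0" "ball c e \<subseteq> S" using assms by (auto simp: mem_interior)
  define t where "t = e / (2 * (norm c + 1))"
  have "t > 0" using e by (simp add: t_def add_nonneg_pos)
  have "t * norm c = (e / 2) * (norm c / (norm c + 1))" by (simp add: t_def)
  also have "\<dots> < e" using e by (simp add: mult_less_cancel_left_pos divide_less_eq add_nonneg_pos)
  finally have "(1 + t) *\<^sub>R c \<in> ball c e" using \<open>t > 0\<close> by (simp add: dist_norm algebra_simps)
  thus ?thesis using that \<open>t > 0\<close> e(2) by blast
qed

lemma supporting_hyperplane_boundary_point:
  fixes S :: "'a::euclidean_space set"
  assumes "convex S" "x \<in> S" "x \<notin> interior S" "interior S \<noteq> {}"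
  obtains a where "a \<noteq> 0" "\<And>y. y \<in> S \<Longrightarrow> a \<bullet> y \<le> a \<bullet> x"
proof -
  obtain a where "a \<noteq> 0" "\<And>y. y \<in> S \<Longrightarrow> a \<bullet> x \<le> a \<bullet> y"
    using supporting_hyperplane_rel_boundary[OF assms(1,2)] assms(3)
      rel_interior_nonempty_interior[OF assms(4)] by metis
  thus ?thesis using that[of "- a"] by simp
qed

locale norm_function =
  fixes N :: "'a::euclidean_space \<Rightarrow> real"
  assumes is_norm: "is_norm N"
begin

lemma nonneg: "0 \<le> N x"
  and zero_iff: "N x = 0 \<longleftrightarrow> x = 0"
  and scaleR: "N (c *\<^sub>R x) = \<bar>c\<bar> * N x"
  and triangle: "N (x + y) \<le> N x + N y"
  using is_norm by (simp_all add: is_norm_def)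

lemma zero [simp]: "N 0 = 0"
  using zero_iff by simp

lemma pos: "x \<noteq> 0 \<Longrightarrow> 0 < N x"
  using nonneg[of x] zero_iff[of x] by linarith

lemma minus: "N (- x) = N x"
  using scaleR[of "-1" x] by simp

lemma normalize: "x \<noteq> 0 \<Longrightarrow> N ((1 / N x) *\<^sub>R x) = 1"
  using pos[of x] by (simp add: scaleR)

lemma convex: "convex_on UNIV N"
  by (rule sublinear_imp_convex_on) (simp_all add: triangle scaleR)

lemma continuous: "continuous_on UNIV N"
  by (rule convex_on_continuous[OF open_UNIV convex])

lemma lower_bound: "\<exists>m>0. \<forall>x. m * norm x \<le> N x"
proof -
  obtain e :: 'a where "e \<in> Basis" using nonempty_Basis by blast
  hence "sphere (0::'a) 1 \<noteq> {}" by (metis mem_sphere_0 norm_Basis empty_iff)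
  then obtain x0 where x0: "x0 \<in> sphere 0 1" "\<And>y. y \<in> sphere 0 1 \<Longrightarrow> N x0 \<le> N y"
    using continuous_attains_inf[OF compact_sphere _ continuous_on_subset[OF continuous]] by blast
  have "N x0 * norm x \<le> N x" for x
  proof (cases "x = 0")
    case False
    have "N x0 \<le> N ((1 / norm x) *\<^sub>R x)" using False by (intro x0(2)) simp
    thus ?thesis using False by (simp add: scaleR field_simps)
  qed simp
  moreover have "N x0 > 0" using x0(1) by (intro pos) auto
  ultimately show ?thesis by blast
qed

lemma unit_ball_closed: "closed (unit_ball_of N)"
  unfolding unit_ball_of_def by (intro closed_Collect_le continuous_on_const continuous)

lemma unit_ball_bounded: "bounded (unit_ball_of N)"
proof -
  obtain m where m: "m > 0" "\<And>x. m * norm x \<le> N x" using lower_bound by blast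
  have "norm x \<le> 1 / m" if "x \<in> unit_ball_of N" for x
    using m(2)[of x] that m(1) by (simp add: unit_ball_of_def field_simps)
  thus ?thesis by (auto simp: bounded_iff)
qed

lemma unit_ball_compact: "compact (unit_ball_of N)"
  using unit_ball_closed unit_ball_bounded by (simp add: compact_eq_bounded_closed)

lemma unit_ball_convex: "convex (unit_ball_of N)"
  unfolding unit_ball_of_def by (rule convex_on_sublevel[OF convex])

lemma zero_in_interior_unit_ball: "0 \<in> interior (unit_ball_of N)"
proof (rule interiorI)
  show "open {x. N x < 1}" by (intro open_Collect_less continuous_on_const continuous)
qed (auto simp: unit_ball_of_def)

lemma exists_unit: "\<exists>w. N w = 1"
proof -
  obtain e :: 'a where "e \<in> Basis" using nonempty_Basis by blast
  thus ?thesis using normalize[of e] nonzero_Basis by blast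
qed

lemma inner_le_dual_norm: "N w = 1 \<Longrightarrow> v \<bullet> w \<le> dual_norm N v"
  unfolding dual_norm_def
proof (rule cSup_upper)
  obtain m where m: "m > 0" "\<And>x. m * norm x \<le> N x" using lower_bound by blast
  have "v \<bullet> w \<le> norm v / m" if "N w = 1" for w
  proof -
    have "norm v * norm w \<le> norm v * (1 / m)"
      using m(2)[of w] that m(1) by (intro mult_left_mono) (auto simp: field_simps)
    thus ?thesis using norm_cauchy_schwarz[of v w] by simp
  qed
  thus "bdd_above {v \<bullet> w |w. N w = 1}" by (auto simp: bdd_above_def)
qed auto

lemma dual_norm_nonneg: "0 \<le> dual_norm N v"
proof -
  obtain w where w: "N w = 1" using exists_unit by blast
  thus ?thesis using inner_le_dual_norm[OF w, of v] inner_le_dual_norm[of "- w" v] by (simp add: minus)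
qed

lemma inner_le_norm_mult_dual_norm: "v \<bullet> x \<le> N x * dual_norm N v"
proof (cases "x = 0")
  case False
  hence "v \<bullet> ((1 / N x) *\<^sub>R x) \<le> dual_norm N v" by (intro inner_le_dual_norm normalize)
  thus ?thesis using pos[OF False] by (simp add: field_simps)
qed (simp add: dual_norm_nonneg)

lemma inner_le_dual_norm_ball: "y \<in> unit_ball_of N \<Longrightarrow> v \<bullet> y \<le> dual_norm N v"
  using inner_le_norm_mult_dual_norm[of v y] mult_right_mono[of "N y" 1 "dual_norm N v"] dual_norm_nonneg
  by (simp add: unit_ball_of_def)

lemma dual_norm_attained: "\<exists>y\<in>unit_ball_of N. v \<bullet> y = dual_norm N v"
proof -
  obtain y where y: "y \<in> unit_ball_of N" "\<And>x. x \<in> unit_ball_of N \<Longrightarrow> v \<bullet> x \<le> v \<bullet> y"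
    using continuous_attains_sup[OF unit_ball_compact, of "inner v"] zero_in_interior_unit_ball
      interior_subset by (fastforce intro: continuous_intros)
  have "dual_norm N v \<le> v \<bullet> y"
    unfolding dual_norm_def
    by (rule cSup_least) (use exists_unit y(2) in \<open>auto simp: unit_ball_of_def\<close>)
  thus ?thesis using inner_le_dual_norm_ball[OF y(1), of v] y(1) by force
qed

lemma dual_norm_eq_maximum:
  "z \<in> unit_ball_of N \<Longrightarrow> (\<And>y. y \<in> unit_ball_of N \<Longrightarrow> v \<bullet> y \<le> v \<bullet> z) \<Longrightarrow> dual_norm N v = v \<bullet> z"
  using dual_norm_attained[of v] inner_le_dual_norm_ball[of z v] by (metis order.antisym)

lemma dual_norm_pos: "v \<noteq> 0 \<Longrightarrow> 0 < dual_norm N v"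
proof -
  assume v: "v \<noteq> 0"
  have "0 < v \<bullet> ((1 / N v) *\<^sub>R v)" using v pos[OF v] by simp
  thus ?thesis using inner_le_dual_norm[OF normalize[OF v], of v] by linarith
qed

lemma dual_norm_scaleR: "0 \<le> t \<Longrightarrow> dual_norm N (t *\<^sub>R v) = t * dual_norm N v"
proof -
  assume t: "0 \<le> t"
  obtain y where y: "y \<in> unit_ball_of N" "t *\<^sub>R v \<bullet> y = dual_norm N (t *\<^sub>R v)"
    using dual_norm_attained by blast
  obtain y' where y': "y' \<in> unit_ball_of N" "v \<bullet> y' = dual_norm N v"
    using dual_norm_attained by blast
  have "dual_norm N (t *\<^sub>R v) \<le> t * dual_norm N v"
    using y inner_le_dual_norm_ball[OF y(1), of v] t by (metis inner_scaleR_left mult_left_mono)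
  moreover have "t * dual_norm N v \<le> dual_norm N (t *\<^sub>R v)"
    using y' inner_le_dual_norm_ball[OF y'(1), of "t *\<^sub>R v"] by simp
  ultimately show ?thesis by simp
qed

lemma dual_norm_zero [simp]: "dual_norm N 0 = 0"
  using dual_norm_scaleR[of 0 0] by simp

lemma dual_norm_triangle: "dual_norm N (v + w) \<le> dual_norm N v + dual_norm N w"
proof -
  obtain y where "y \<in> unit_ball_of N" "(v + w) \<bullet> y = dual_norm N (v + w)"
    using dual_norm_attained by blast
  thus ?thesis
    using inner_le_dual_norm_ball[of y v] inner_le_dual_norm_ball[of y w] by (simp add: inner_add_left)
qed

lemma dual_norm_convex: "convex_on UNIV (dual_norm N)"
  by (rule sublinear_imp_convex_on) (simp_all add: dual_norm_triangle dual_norm_scaleR)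

lemma dual_norm_continuous: "continuous_on UNIV (dual_norm N)"
  by (rule convex_on_continuous[OF open_UNIV dual_norm_convex])

lemma is_face_iff_face_of: "is_face N F \<longleftrightarrow> closed F \<and> F face_of unit_ball_of N"
proof
  assume F: "is_face N F"
  have "a \<in> F \<and> b \<in> F"
    if ab: "a \<in> unit_ball_of N" "b \<in> unit_ball_of N" and x: "x \<in> F" "x \<in> open_segment a b" for a b x
  proof -
    obtain u where u: "0 < u" "u < 1" "x = (1 - u) *\<^sub>R a + u *\<^sub>R b" using x(2) by (auto simp: in_segment)
    have "(1 - u) *\<^sub>R a + (1 - (1 - u)) *\<^sub>R b \<in> F" using u x by simp
    moreover have "0 < 1 - u" "1 - u < 1" using u by auto
    ultimately show ?thesis using F ab unfolding is_face_def by blast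
  qed
  hence "F face_of unit_ball_of N" using F unfolding face_of_def is_face_def by blast
  thus "closed F \<and> F face_of unit_ball_of N" using F by (simp add: is_face_def)
next
  assume F: "closed F \<and> F face_of unit_ball_of N"
  have "u \<in> F \<and> w \<in> F"
    if "u \<in> unit_ball_of N" "w \<in> unit_ball_of N" "0 < t" "t < 1" "t *\<^sub>R u + (1 - t) *\<^sub>R w \<in> F" for u w t
  proof (cases "u = w")
    case False
    hence "t *\<^sub>R u + (1 - t) *\<^sub>R w \<in> open_segment w u"
      using that(3,4) by (auto simp: in_segment intro!: exI[of _ t])
    thus ?thesis using face_ofD F that by blast
  qed (use that in \<open>simp flip: scaleR_add_left\<close>)
  thus "is_face N F"
    using F face_of_imp_convex face_of_imp_subset unfolding is_face_def by blast
qed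

lemma exposed_face_is_face:
  assumes "\<And>y. y \<in> unit_ball_of N \<Longrightarrow> b \<bullet> y \<le> m"
  shows "is_face N {y\<in>unit_ball_of N. b \<bullet> y = m}"
proof -
  have "{y\<in>unit_ball_of N. b \<bullet> y = m} = unit_ball_of N \<inter> {y. b \<bullet> y = m}" by auto
  thus ?thesis
    using is_face_iff_face_of closed_Int[OF unit_ball_closed closed_hyperplane]
      face_of_Int_supporting_hyperplane_le[OF unit_ball_convex] assms by simp
qed

lemma proper_face_zero_notin:
  assumes F: "F face_of unit_ball_of N" "F \<noteq> unit_ball_of N"
  shows "0 \<notin> F"
proof
  assume "0 \<in> F"
  have "y \<in> F" if y: "y \<in> unit_ball_of N" for y
  proof (cases "y = 0")
    case False
    have "- y \<in> unit_ball_of N" using y by (simp add: unit_ball_of_def minus)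
    moreover have "y \<noteq> - y"
    proof
      assume "y = - y"
      hence "(2::real) *\<^sub>R y = 0" by (metis add.right_inverse scaleR_2)
      thus False using False by simp
    qed
    hence "0 \<in> open_segment y (- y)" by (auto simp: in_segment intro!: exI[of _ "1/2"])
    ultimately show ?thesis using face_ofD[OF F(1)] y \<open>0 \<in> F\<close> by blast
  qed (use \<open>0 \<in> F\<close> in simp)
  thus False using F face_of_imp_subset by blast
qed

lemma proper_face_norm_eq_1:
  assumes F: "F face_of unit_ball_of N" "F \<noteq> unit_ball_of N" and x: "x \<in> F"
  shows "N x = 1"
proof (rule ccontr)
  assume "N x \<noteq> 1"
  moreover have "x \<in> unit_ball_of N" using x face_of_imp_subset[OF F(1)] by blast
  ultimately have lt: "N x < 1" by (simp add: unit_ball_of_def)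
  have "x \<noteq> 0" using proper_face_zero_notin[OF F] x by blast
  define y where "y = (1 / N x) *\<^sub>R x"
  have "y \<in> unit_ball_of N" using normalize[OF \<open>x \<noteq> 0\<close>] by (simp add: y_def unit_ball_of_def)
  moreover have "x \<in> open_segment 0 y"
    using lt pos[OF \<open>x \<noteq> 0\<close>] \<open>x \<noteq> 0\<close> by (auto simp: in_segment y_def intro!: exI[of _ "N x"])
  ultimately have "0 \<in> F" using face_ofD[OF F(1)] x zero_in_interior_unit_ball interior_subset by blast
  thus False using proper_face_zero_notin[OF F] by blast
qed

lemma maximizer_norm_eq_1:
  assumes v: "v \<noteq> 0" and z: "z \<in> unit_ball_of N"
    and max: "\<And>y. y \<in> unit_ball_of N \<Longrightarrow> v \<bullet> y \<le> v \<bullet> z"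
  shows "N z = 1"
proof -
  define F where "F = {y\<in>unit_ball_of N. v \<bullet> y = v \<bullet> z}"
  have "F face_of unit_ball_of N" using exposed_face_is_face[OF max] is_face_iff_face_of by (simp add: F_def)
  moreover have "0 \<notin> F"
    using dual_norm_eq_maximum[OF z max] dual_norm_pos[OF v] by (simp add: F_def)
  hence "F \<noteq> unit_ball_of N" using zero_in_interior_unit_ball interior_subset by blast
  ultimately show ?thesis using proper_face_norm_eq_1 z by (simp add: F_def)
qed

lemma unit_sphere_supported:
  assumes p: "N p = 1"
  obtains a where "a \<noteq> 0" "\<And>y. y \<in> unit_ball_of N \<Longrightarrow> a \<bullet> y \<le> a \<bullet> p"
proof (rule supporting_hyperplane_boundary_point[OF unit_ball_convex])
  show "p \<in> unit_ball_of N" using p by (simp add: unit_ball_of_def)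
  show "p \<notin> interior (unit_ball_of N)"
  proof
    assume "p \<in> interior (unit_ball_of N)"
    then obtain t where "t > 0" "(1 + t) *\<^sub>R p \<in> unit_ball_of N" by (rule interior_scaleR_out)
    thus False using p by (simp add: unit_ball_of_def scaleR)
  qed
  show "interior (unit_ball_of N) \<noteq> {}" using zero_in_interior_unit_ball by blast
qed (use that in blast)

lemma dual_norm_dual:
  obtains v where "dual_norm N v \<le> 1" "a \<bullet> v = N a"
proof (cases "a = 0")
  case False
  define p where "p = (1 / N a) *\<^sub>R a"
  have "N p = 1" using normalize[OF False] by (simp add: p_def)
  then obtain v' where v': "v' \<noteq> 0" "\<And>y. y \<in> unit_ball_of N \<Longrightarrow> v' \<bullet> y \<le> v' \<bullet> p"
    using unit_sphere_supported by blast
  have "dual_norm N v' = p \<bullet> v'"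
    using dual_norm_eq_maximum v' \<open>N p = 1\<close> by (simp add: unit_ball_of_def inner_commute)
  moreover have "dual_norm N v' > 0" using dual_norm_pos[OF v'(1)] .
  ultimately have "dual_norm N ((1 / dual_norm N v') *\<^sub>R v') = 1" "p \<bullet> ((1 / dual_norm N v') *\<^sub>R v') = 1"
    by (simp_all add: dual_norm_scaleR)
  moreover have "a \<bullet> w = N a * (p \<bullet> w)" for w using pos[OF False] by (simp add: p_def)
  ultimately show ?thesis using that[of "(1 / dual_norm N v') *\<^sub>R v'"] by simp
qed (use that[of 0] in simp)

section \<open>Tight norms have unitangent normals on faces\<close>

lemma maximizer_decomp_X2:
  assumes z: "z \<in> unit_ball_of N" and max: "\<And>y. y \<in> unit_ball_of N \<Longrightarrow> b \<bullet> y \<le> b \<bullet> z"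
  shows "is_decomp N norm (z + b) z b"
  unfolding is_decomp_def
proof (intro conjI allI impI)
  fix a' b' assume eq: "z + b = a' + b'"
  show "N z < N a' \<or> norm b < norm b' \<or> (N a' = N z \<and> norm b' = norm b)"
  proof (cases "N a' \<le> N z")
    case True
    hence "a' \<in> unit_ball_of N" using z by (simp add: unit_ball_of_def)
    hence nonneg: "0 \<le> b \<bullet> (z - a')" using max by (simp add: inner_diff_right)
    have "b' = b + (z - a')" using eq by (simp add: algebra_simps)
    hence sq: "(norm b')\<^sup>2 = (norm b)\<^sup>2 + (norm (z - a'))\<^sup>2 + 2 * (b \<bullet> (z - a'))"
      using dot_norm[of b "z - a'"] by simp
    show ?thesis
    proof (cases "a' = z")
      case False
      hence "0 < (norm (z - a'))\<^sup>2" by simp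
      hence "(norm b)\<^sup>2 < (norm b')\<^sup>2" using sq nonneg by linarith
      thus ?thesis using power2_less_imp_less[of "norm b" "norm b'"] by simp
    qed (use \<open>b' = b + (z - a')\<close> in simp)
  qed simp
qed simp

lemma dual_ball_maximizer:
  assumes "0 \<le> r" and max: "\<And>e. dual_norm N e \<le> r \<Longrightarrow> w \<bullet> e \<le> w \<bullet> b"
  shows "r * N w \<le> w \<bullet> b"
proof -
  obtain v where v: "dual_norm N v \<le> 1" "w \<bullet> v = N w" by (rule dual_norm_dual)
  hence "dual_norm N (r *\<^sub>R v) \<le> r" using assms(1) by (simp add: dual_norm_scaleR mult_left_le)
  thus ?thesis using max[of "r *\<^sub>R v"] v(2) by simp
qed

text \<open>Scaling z + b up would give a strictly better decomposition.\<close>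

lemma XY_decomp_not_interior:
  assumes XY: "is_decomp N (dual_norm N) (z + b) z b" and z: "N z = 1"
  shows "z + b \<notin> interior (unit_ball_of N + {e. dual_norm N e \<le> dual_norm N b})"
proof
  assume "z + b \<in> interior (unit_ball_of N + {e. dual_norm N e \<le> dual_norm N b})"
  then obtain t where t: "t > 0" "(1 + t) *\<^sub>R (z + b) \<in> unit_ball_of N + {e. dual_norm N e \<le> dual_norm N b}"
    by (rule interior_scaleR_out)
  then obtain y e where ye: "(1 + t) *\<^sub>R (z + b) = y + e" "N y \<le> 1" "dual_norm N e \<le> dual_norm N b"
    by (auto simp: unit_ball_of_def elim: set_plus_elim)
  define s where "s = 1 / (1 + t)"
  have s: "0 < s" "s < 1" using t(1) by (simp_all add: s_def)
  have "z + b = s *\<^sub>R y + s *\<^sub>R e"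
    using arg_cong[OF ye(1), of "scaleR s"] t(1) by (simp add: s_def scaleR_add_right)
  moreover have "N (s *\<^sub>R y) < N z"
  proof -
    have "s * N y \<le> s" using mult_left_le[OF ye(2)] s by simp
    moreover have "N (s *\<^sub>R y) = s * N y" using s by (simp add: scaleR)
    ultimately show ?thesis using s z by linarith
  qed
  moreover have "dual_norm N (s *\<^sub>R e) \<le> dual_norm N b"
  proof -
    have "s * dual_norm N e \<le> 1 * dual_norm N e"
      using s dual_norm_nonneg by (intro mult_right_mono) auto
    thus ?thesis using ye(3) s by (simp add: dual_norm_scaleR)
  qed
  ultimately show False
    using XY unfolding is_decomp_def by (metis not_less_iff_gr_or_eq order.strict_trans1)
qed

lemma XY_decomp_supported:
  assumes XY: "is_decomp N (dual_norm N) (z + b) z b" and z: "N z = 1" and b: "b \<noteq> 0"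
  obtains w where "N w = 1" "\<And>y. y \<in> unit_ball_of N \<Longrightarrow> w \<bullet> y \<le> w \<bullet> z"
    "dual_norm N b \<le> b \<bullet> w"
proof -
  define S where "S = unit_ball_of N + {e. dual_norm N e \<le> dual_norm N b}"
  have mem: "y + e \<in> S" if "y \<in> unit_ball_of N" "dual_norm N e \<le> dual_norm N b" for y e
    using that by (auto simp: S_def)
  have "convex S"
    unfolding S_def by (intro convex_set_plus unit_ball_convex convex_on_sublevel dual_norm_convex)
  have "{x. N (x - b) < 1} \<subseteq> S" using mem[of "_ - b" b] by (force simp: unit_ball_of_def)
  moreover have "open {x. N (x - b) < 1}"
    by (intro open_Collect_less continuous_on_const continuous_on_compose2[OF continuous]
        continuous_intros) auto
  ultimately have "b \<in> interior S" by (auto intro: interiorI)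
  have zB: "z \<in> unit_ball_of N" using z by (simp add: unit_ball_of_def)
  have "z + b \<notin> interior S" using XY_decomp_not_interior[OF XY z] by (simp add: S_def)
  then obtain a where a: "a \<noteq> 0" "\<And>s. s \<in> S \<Longrightarrow> a \<bullet> s \<le> a \<bullet> (z + b)"
    using supporting_hyperplane_boundary_point[OF \<open>convex S\<close> mem[OF zB order_refl]]
      \<open>b \<in> interior S\<close> by blast
  have "N a > 0" using pos[OF a(1)] .
  define w where "w = (1 / N a) *\<^sub>R a"
  show ?thesis
  proof (rule that)
    show "N w = 1" using normalize[OF a(1)] by (simp add: w_def)
    show "w \<bullet> y \<le> w \<bullet> z" if "y \<in> unit_ball_of N" for y
      using a(2)[OF mem[OF that order_refl]] \<open>N a > 0\<close> by (simp add: w_def inner_add_right divide_right_mono)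
    have "dual_norm N b * N a \<le> a \<bullet> b"
      using a(2)[OF mem[OF zB]] by (intro dual_ball_maximizer dual_norm_nonneg) (simp add: inner_add_right)
    thus "dual_norm N b \<le> b \<bullet> w" using \<open>N a > 0\<close> by (simp add: w_def pos_le_divide_eq inner_commute)
  qed
qed

lemma tight_exposed_face_normal:
  assumes tight: "tight N (z + b)" and z: "z \<in> unit_ball_of N" and b: "b \<noteq> 0"
    and max: "\<And>y. y \<in> unit_ball_of N \<Longrightarrow> b \<bullet> y \<le> b \<bullet> z"
  obtains w where "N w = 1" "b \<bullet> w = b \<bullet> z" "\<And>y. y \<in> unit_ball_of N \<Longrightarrow> w \<bullet> y \<le> w \<bullet> z"
proof -
  have "N z = 1" using maximizer_norm_eq_1[OF b z max] .
  moreover have "is_decomp N (dual_norm N) (z + b) z b"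
    using tight maximizer_decomp_X2[OF z max] by (simp add: tight_def)
  ultimately obtain w where w: "N w = 1" "\<And>y. y \<in> unit_ball_of N \<Longrightarrow> w \<bullet> y \<le> w \<bullet> z"
    "dual_norm N b \<le> b \<bullet> w"
    using XY_decomp_supported b by blast
  have "b \<bullet> w \<le> b \<bullet> z" using max w(1) by (simp add: unit_ball_of_def)
  moreover have "dual_norm N b = b \<bullet> z" using dual_norm_eq_maximum[OF z max] .
  ultimately show ?thesis using that w by force
qed

lemma tight_normal_near_face:
  assumes tight: "\<forall>c. tight N c" and F: "F face_of unit_ball_of N" "u \<in> F"
    and y0: "y0 \<in> unit_ball_of N" and \<delta>: "0 < \<delta>" "\<delta> \<le> infdist y0 F"
  obtains w where "N w = 1" "infdist w F < \<delta>" "dual_norm N w \<le> w \<bullet> u + norm w * \<delta>"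
proof -
  obtain b z where z: "z \<in> unit_ball_of N" "\<forall>y\<in>unit_ball_of N. b \<bullet> y \<le> b \<bullet> z" "dist z u < \<delta>"
    and near: "\<forall>g\<in>unit_ball_of N. b \<bullet> g = b \<bullet> z \<longrightarrow> infdist g F < \<delta>"
    using face_of_approx_by_exposed[OF unit_ball_compact unit_ball_convex F \<delta>(1)] by blast
  have "b \<noteq> 0" using near y0 \<delta>(2) by force
  then obtain w where w: "N w = 1" "b \<bullet> w = b \<bullet> z" "\<And>y. y \<in> unit_ball_of N \<Longrightarrow> w \<bullet> y \<le> w \<bullet> z"
    using tight_exposed_face_normal[OF _ z(1)] tight z(2) by blast
  have "w \<bullet> (z - u) \<le> norm w * \<delta>"
    using norm_cauchy_schwarz[of w "z - u"] z(3) mult_left_mono[of "norm (z - u)" \<delta> "norm w"]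
    by (simp add: dist_norm)
  hence "dual_norm N w \<le> w \<bullet> u + norm w * \<delta>"
    using dual_norm_eq_maximum[OF z(1) w(3)] by (simp add: inner_diff_right)
  moreover have "infdist w F < \<delta>" using near w(1,2) by (simp add: unit_ball_of_def)
  ultimately show ?thesis using that w(1) by blast
qed

text \<open>The function h below vanishes exactly at the points of F that are normal to the unit ball at
  u; the approximate normals make its minimum over the compact unit ball zero.\<close>

lemma tight_face_normal_in_face:
  assumes tight: "\<forall>c. tight N c" and F: "closed F" "F face_of unit_ball_of N" "F \<noteq> unit_ball_of N"
    and u: "u \<in> F"
  obtains w where "w \<in> F" "dual_norm N w = w \<bullet> u"
proof -
  obtain y0 where y0: "y0 \<in> unit_ball_of N" "y0 \<notin> F" using F(2,3) face_of_imp_subset by blast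
  have "0 < infdist y0 F" using infdist_pos_not_in_closed[OF F(1)] u y0(2) by blast
  obtain R where R: "\<And>x. x \<in> unit_ball_of N \<Longrightarrow> norm x \<le> R" "R > 0"
    using unit_ball_bounded by (auto simp: bounded_pos)
  have gap: "0 \<le> dual_norm N x - x \<bullet> u" for x
    using inner_le_dual_norm_ball[of u x] u face_of_imp_subset[OF F(2)] by auto
  define h where "h x = infdist x F + (dual_norm N x - x \<bullet> u)" for x
  have "continuous_on (unit_ball_of N) h" unfolding h_def
    by (intro continuous_intros continuous_on_subset[OF dual_norm_continuous]) auto
  moreover have "unit_ball_of N \<noteq> {}" using y0(1) by blast
  ultimately obtain w where w: "w \<in> unit_ball_of N" "\<And>x. x \<in> unit_ball_of N \<Longrightarrow> h w \<le> h x"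
    using continuous_attains_inf[OF unit_ball_compact] by metis
  have "h w \<le> 0 + e" if "e > 0" for e
  proof -
    define \<delta> where "\<delta> = min (infdist y0 F) (e / (1 + R))"
    have \<delta>: "0 < \<delta>" "\<delta> \<le> infdist y0 F"
      using \<open>0 < infdist y0 F\<close> that R(2) by (simp_all add: \<delta>_def)
    have "\<delta> \<le> e / (1 + R)" by (simp add: \<delta>_def)
    hence "(1 + R) * \<delta> \<le> e" using R(2) by (simp add: le_divide_eq mult.commute)
    obtain w' where w': "N w' = 1" "infdist w' F < \<delta>" "dual_norm N w' \<le> w' \<bullet> u + norm w' * \<delta>"
      using tight_normal_near_face[OF tight F(2) u y0(1) \<delta>(1,2)] .
    have "w' \<in> unit_ball_of N" using w'(1) by (simp add: unit_ball_of_def)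
    hence "norm w' * \<delta> \<le> R * \<delta>" using R(1) \<delta>(1) by (simp add: mult_right_mono)
    hence "h w' \<le> (1 + R) * \<delta>" using w'(2,3) by (simp add: h_def algebra_simps)
    thus ?thesis using w(2)[OF \<open>w' \<in> unit_ball_of N\<close>] \<open>(1 + R) * \<delta> \<le> e\<close> by simp
  qed
  hence "h w \<le> 0" by (rule field_le_epsilon)
  hence "infdist w F = 0" "dual_norm N w = w \<bullet> u"
    using infdist_nonneg[of w F] gap[of w] by (simp_all add: h_def)
  thus ?thesis using that in_closed_iff_infdist_zero[OF F(1)] u by blast
qed

lemma tight_imp_unitangent_face:
  assumes tight: "\<forall>c. tight N c" and F: "is_face N F" "F \<noteq> {}" "F \<noteq> unit_ball_of N"
  shows "\<exists>u\<in>F. unitangent N u \<and> (\<forall>v\<in>F. \<forall>v'\<in>F. u \<bullet> (v - v') = 0)"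
proof -
  have Ff: "closed F" "F face_of unit_ball_of N" using F(1) is_face_iff_face_of by auto
  obtain u where u: "u \<in> rel_interior F"
    using rel_interior_eq_empty face_of_imp_convex[OF Ff(2)] F(2) by blast
  hence "u \<in> F" using rel_interior_subset by blast
  then obtain w where w: "w \<in> F" "dual_norm N w = w \<bullet> u"
    using tight_face_normal_in_face[OF tight Ff F(3)] by blast
  have "unit_ball_of N \<inter> {y. w \<bullet> y = w \<bullet> u} face_of unit_ball_of N"
    using face_of_Int_supporting_hyperplane_le[OF unit_ball_convex] inner_le_dual_norm_ball w(2) by metis
  moreover have "u \<in> unit_ball_of N \<inter> {y. w \<bullet> y = w \<bullet> u}"
    using \<open>u \<in> F\<close> face_of_imp_subset[OF Ff(2)] by blast
  ultimately have "F \<subseteq> unit_ball_of N \<inter> {y. w \<bullet> y = w \<bullet> u}"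
    using subset_of_face_of[OF _ face_of_imp_subset[OF Ff(2)]] u by blast
  hence perp: "w \<bullet> v = w \<bullet> u" if "v \<in> F" for v using that by blast
  have "N w = 1" using proper_face_norm_eq_1[OF Ff(2) F(3) w(1)] .
  hence "unitangent N w"
    using w perp[OF w(1)] by (simp add: unitangent_def power2_norm_eq_inner)
  thus ?thesis using w(1) perp by (auto simp: inner_diff_right)
qed

section \<open>Unitangent normals on faces make a norm tight\<close>

lemma decomp_zero_left: "is_decomp N Q b 0 b"
  unfolding is_decomp_def
proof (intro conjI allI impI)
  fix a' b' assume "b = a' + b'"
  thus "N 0 < N a' \<or> Q b < Q b' \<or> (N a' = N 0 \<and> Q b' = Q b)" by (cases "a' = 0") (simp_all add: pos)
qed simp

lemma decomp_zero_right: "is_decomp P (dual_norm N) a a 0"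
  unfolding is_decomp_def
proof (intro conjI allI impI)
  fix a' b' assume "a = a' + b'"
  thus "P a < P a' \<or> dual_norm N 0 < dual_norm N b' \<or> (P a' = P a \<and> dual_norm N b' = dual_norm N 0)"
    by (cases "b' = 0") (simp_all add: dual_norm_pos)
qed simp

lemma X2_decomp_variational:
  assumes X2: "is_decomp N norm c a b" and y: "N y \<le> N a"
  shows "b \<bullet> y \<le> b \<bullet> a"
proof -
  have "convex {y. N y \<le> N a}" by (rule convex_on_sublevel[OF convex])
  moreover have "closed {y. N y \<le> N a}" by (intro closed_Collect_le continuous_on_const continuous)
  moreover have "dist c a \<le> dist c y'" if "y' \<in> {y. N y \<le> N a}" for y'
  proof -
    have "c = y' + (c - y')" by simp
    hence "N a < N y' \<or> norm b < norm (c - y') \<or> (N y' = N a \<and> norm (c - y') = norm b)"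
      using X2 unfolding is_decomp_def by blast
    hence "norm b \<le> norm (c - y')" using that by auto
    thus ?thesis using X2 by (simp add: is_decomp_def dist_norm)
  qed
  ultimately have "(c - a) \<bullet> (y - a) \<le> 0" using any_closest_point_dot y by blast
  moreover have "c - a = b" using X2 by (simp add: is_decomp_def)
  ultimately show ?thesis by (simp add: inner_diff_right)
qed

lemma dual_certificate_decomp_XY:
  assumes c: "c = a + b" and u: "N u = 1" "0 < dual_norm N u"
    and cert: "u \<bullet> c = N a * dual_norm N u + dual_norm N b"
  shows "is_decomp N (dual_norm N) c a b"
  unfolding is_decomp_def
proof (intro conjI allI impI)
  fix a' b' assume "c = a' + b'"
  hence "N a * dual_norm N u + dual_norm N b \<le> N a' * dual_norm N u + dual_norm N b'"
    using cert inner_le_norm_mult_dual_norm[of u a'] inner_le_norm_mult_dual_norm[of b' u] u(1)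
    by (simp add: inner_add_right inner_commute)
  hence ineq: "dual_norm N b + (N a - N a') * dual_norm N u \<le> dual_norm N b'"
    by (simp add: algebra_simps)
  show "N a < N a' \<or> dual_norm N b < dual_norm N b' \<or> (N a' = N a \<and> dual_norm N b' = dual_norm N b)"
  proof (cases "N a' < N a")
    case True
    hence "0 < (N a - N a') * dual_norm N u" using u(2) by simp
    thus ?thesis using ineq by linarith
  next
    case False
    thus ?thesis using ineq by (cases "N a' = N a") auto
  qed
qed (rule c)

text \<open>By first-order optimality of a, the vector b exposes the face of the unit ball through a / N a;
  the certificate is a unitangent vector perpendicular to that face.\<close>

lemma X2_decomp_dual_certificate:
  assumes H: "\<forall>F. is_face N F \<and> F \<noteq> {} \<and> F \<noteq> unit_ball_of N \<longrightarrow>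
       (\<exists>u\<in>F. unitangent N u \<and> (\<forall>v\<in>F. \<forall>w\<in>F. u \<bullet> (v - w) = 0))"
    and X2: "is_decomp N norm c a b" and a: "a \<noteq> 0" and b: "b \<noteq> 0"
  obtains u where "N u = 1" "0 < dual_norm N u" "u \<bullet> c = N a * dual_norm N u + dual_norm N b"
proof -
  define p where "p = (1 / N a) *\<^sub>R a"
  have pB: "p \<in> unit_ball_of N" using normalize[OF a] by (simp add: p_def unit_ball_of_def)
  have max: "b \<bullet> y \<le> b \<bullet> p" if "y \<in> unit_ball_of N" for y
  proof -
    have "b \<bullet> (N a *\<^sub>R y) \<le> b \<bullet> a"
      using that nonneg[of a] by (intro X2_decomp_variational[OF X2]) (simp add: scaleR unit_ball_of_def mult_left_le)
    thus ?thesis using pos[OF a] by (simp add: p_def divide_right_mono mult.commute pos_le_divide_eq)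
  qed
  define F where "F = {y\<in>unit_ball_of N. b \<bullet> y = b \<bullet> p}"
  have Yb: "dual_norm N b = b \<bullet> p" using dual_norm_eq_maximum[OF pB max] .
  have "is_face N F" unfolding F_def by (rule exposed_face_is_face) (use max in auto)
  moreover have "p \<in> F" using pB by (simp add: F_def)
  moreover have "0 \<notin> F" using dual_norm_pos[OF b] Yb by (auto simp: F_def)
  hence "F \<noteq> unit_ball_of N" using zero_in_interior_unit_ball interior_subset by blast
  ultimately obtain u where u: "u \<in> F" "unitangent N u" "\<And>v w. v \<in> F \<Longrightarrow> w \<in> F \<Longrightarrow> u \<bullet> (v - w) = 0"
    using H by blast
  have "N u = 1"
    using proper_face_norm_eq_1 \<open>is_face N F\<close> is_face_iff_face_of \<open>F \<noteq> unit_ball_of N\<close> u(1) by blast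
  have "u \<bullet> p = dual_norm N u"
    using u(2) u(3)[OF \<open>p \<in> F\<close> u(1)] \<open>N u = 1\<close>
    by (simp add: unitangent_def inner_diff_right power2_norm_eq_inner)
  moreover have "b \<bullet> u = dual_norm N b" using u(1) Yb by (simp add: F_def)
  moreover have "c = N a *\<^sub>R p + b" using X2 pos[OF a] by (simp add: is_decomp_def p_def)
  ultimately have "u \<bullet> c = N a * dual_norm N u + dual_norm N b"
    by (simp add: inner_add_right inner_commute[of u b])
  moreover have "u \<noteq> 0" using \<open>N u = 1\<close> by auto
  ultimately show ?thesis using that[OF \<open>N u = 1\<close> dual_norm_pos] by blast
qed

lemma unitangent_faces_imp_tight:
  assumes H: "\<forall>F. is_face N F \<and> F \<noteq> {} \<and> F \<noteq> unit_ball_of N \<longrightarrow>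
       (\<exists>u\<in>F. unitangent N u \<and> (\<forall>v\<in>F. \<forall>w\<in>F. u \<bullet> (v - w) = 0))"
  shows "tight N c"
  unfolding tight_def
proof (intro allI impI)
  fix a b assume X2: "is_decomp N norm c a b"
  hence c: "c = a + b" by (simp add: is_decomp_def)
  show "is_decomp N (dual_norm N) c a b"
  proof (cases "a = 0 \<or> b = 0")
    case True
    thus ?thesis using c decomp_zero_left decomp_zero_right by auto
  next
    case False
    then obtain u where "N u = 1" "0 < dual_norm N u" "u \<bullet> c = N a * dual_norm N u + dual_norm N b"
      using X2_decomp_dual_certificate[OF H X2] by blast
    thus ?thesis by (rule dual_certificate_decomp_XY[OF c])
  qed
qed

end

theorem mainTheorem15:
  fixes N :: "'a::euclidean_space \<Rightarrow> real"
  assumes "is_norm N"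
  shows "(\<forall>c. tight N c) \<longleftrightarrow>
    (\<forall>F. is_face N F \<and> F \<noteq> {} \<and> F \<noteq> unit_ball_of N \<longrightarrow>
       (\<exists>u\<in>F. unitangent N u \<and> (\<forall>v\<in>F. \<forall>w\<in>F. inner u (v - w) = 0)))"
proof -
  interpret norm_function N by (rule norm_function.intro[OF assms])
  show ?thesis
  proof
    assume "\<forall>c. tight N c"
    thus "\<forall>F. is_face N F \<and> F \<noteq> {} \<and> F \<noteq> unit_ball_of N \<longrightarrow>
       (\<exists>u\<in>F. unitangent N u \<and> (\<forall>v\<in>F. \<forall>w\<in>F. inner u (v - w) = 0))"
      using tight_imp_unitangent_face by blast
  qed (use unitangent_faces_imp_tight in blast)
qed

end
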